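(* Let $\alpha,\beta,\gamma$ be nonnegative real numbers with $\gamma\neq 0$, and put $r=\beta/\gamma$, $s=\alpha/\gamma$, $t=1/\gamma$. Let $(V_n)_{n\in\mathbb{Z}}$ be the generalized Tribonacci sequence with parameters $r,s,t$ (defined in the context). Let $x_{-1},x_0$ be nonzero real numbers with $(x_{-1},x_0)\notin F$, where $$F=\bigcup_{n=-1}^{\infty}\left\{(x_{-1},x_0):\ tV_n x_{-1}x_0+(V_{n+2}-rV_{n+1})x_0+V_{n+1}=0\right\},$$ and let $(x_n)_{n\ge -1}$ be the solution of $$x_{n+1}=\frac{\gamma}{x_n(x_{n-1}+\alpha)+\beta},\qquad n=0,1,2,\dots$$ with these initial values. Then for all $n=0,1,2,\dots$, $$x_n=\frac{tV_{n-1}x_{-1}x_0+(V_{n+1}-rV_n)x_0+V_n}{tV_nx_{-1}x_0+(V_{n+2}-rV_{n+1})x_0+V_{n+1}}.$$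
   Context: The generalized Tribonacci sequence with real parameters $r,s,t$ ($t\neq 0$) is defined by $V_0=0$, $V_1=1$, $V_2=r$ and $V_{n+3}=rV_{n+2}+sV_{n+1}+tV_n$ for $n\ge 0$, and is extended to negative indices by $V_{-n}=-\frac{s}{t}V_{-(n-1)}-\frac{r}{t}V_{-(n-2)}+\frac{1}{t}V_{-(n-3)}$ for $n=1,2,3,\dots$, so that the recurrence holds for all integers $n$ (in particular $V_{-1}=0$). *)

theory Defs
  imports Complex_Main
begin

fun tribV_nat :: "real \<Rightarrow> real \<Rightarrow> real \<Rightarrow> nat \<Rightarrow> real" where
  "tribV_nat r s t 0 = 0"
| "tribV_nat r s t (Suc 0) = 1"
| "tribV_nat r s t (Suc (Suc 0)) = r"
| "tribV_nat r s t (Suc (Suc (Suc n))) =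
     r * tribV_nat r s t (Suc (Suc n)) + s * tribV_nat r s t (Suc n) + t * tribV_nat r s t n"

text \<open>Backward sequence: tribV_back r s t k = V_(2-k).\<close>
fun tribV_back :: "real \<Rightarrow> real \<Rightarrow> real \<Rightarrow> nat \<Rightarrow> real" where
  "tribV_back r s t 0 = r"
| "tribV_back r s t (Suc 0) = 1"
| "tribV_back r s t (Suc (Suc 0)) = 0"
| "tribV_back r s t (Suc (Suc (Suc k))) =
     - (s / t) * tribV_back r s t (Suc (Suc k)) - (r / t) * tribV_back r s t (Suc k)
     + (1 / t) * tribV_back r s t k"

definition tribV :: "real \<Rightarrow> real \<Rightarrow> real \<Rightarrow> int \<Rightarrow> real" where
  "tribV r s t n = (if n \<ge> 0 then tribV_nat r s t (nat n) else tribV_back r s t (nat (2 - n)))"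

definition forbidden_set :: "real \<Rightarrow> real \<Rightarrow> real \<Rightarrow> (real \<times> real) set" where
  "forbidden_set r s t = (\<Union>n\<in>{-1::int..}. {(a, b). t * tribV r s t n * a * b
      + (tribV r s t (n + 2) - r * tribV r s t (n + 1)) * b + tribV r s t (n + 1) = 0})"

end

theory Submission
  imports Defs
begin

text \<open>The substitution \<open>x\<^sub>n = N\<^sub>n / N\<^sub>n\<^sub>+\<^sub>1\<close> linearizes the equation into
  \<open>\<gamma> N\<^sub>n\<^sub>+\<^sub>2 = \<beta> N\<^sub>n\<^sub>+\<^sub>1 + \<alpha> N\<^sub>n + N\<^sub>n\<^sub>-\<^sub>1\<close>, which after dividing by \<open>\<gamma>\<close> is the Tribonacci
  recurrence with parameters \<open>r, s, t\<close>. The numerator of the claimed formula is a combination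
  of shifts of \<open>V\<close>, hence solves that recurrence, and its values at \<open>-1, 0, 1\<close> are
  \<open>x\<^sub>-\<^sub>1 x\<^sub>0, x\<^sub>0, 1\<close>, matching the initial data. The set \<open>F\<close> is exactly where one of the
  denominators \<open>N\<^sub>n\<^sub>+\<^sub>1\<close>, \<open>n \<ge> -1\<close>, vanishes.\<close>

lemma tribV_eq_tribV_back:
  "n \<le> 2 \<Longrightarrow> tribV r s t n = tribV_back r s t (nat (2 - n))"
proof (cases "n < 0")
  case True
  then show ?thesis by (simp add: tribV_def)
next
  case False
  assume "n \<le> 2"
  with False have "n = 0 \<or> n = 1 \<or> n = 2" by arith
  then show ?thesis by (auto simp add: tribV_def numeral_2_eq_2)
qed

lemma tribV_rec:
  assumes "t \<noteq> 0"
  shows "tribV r s t (n + 3) = r * tribV r s t (n + 2) + s * tribV r s t (n + 1) + t * tribV r s t n"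
proof (cases "n \<ge> 0")
  case True
  then obtain m where m: "n = int m" by (metis nonneg_eq_int)
  have "nat (int m + 3) = Suc (Suc (Suc m))" "nat (int m + 2) = Suc (Suc m)"
    "nat (int m + 1) = Suc m" by auto
  then show ?thesis using m by (simp add: tribV_def)
next
  case False
  define k where "k = nat (-1 - n)"
  have "nat (2 - n) = Suc (Suc (Suc k))" "nat (2 - (n + 1)) = Suc (Suc k)"
    "nat (2 - (n + 2)) = Suc k" "nat (2 - (n + 3)) = k"
    using False by (auto simp: k_def)
  then have "tribV r s t n = tribV_back r s t (Suc (Suc (Suc k)))"
    "tribV r s t (n + 1) = tribV_back r s t (Suc (Suc k))"
    "tribV r s t (n + 2) = tribV_back r s t (Suc k)"
    "tribV r s t (n + 3) = tribV_back r s t k"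
    using False by (simp_all add: tribV_eq_tribV_back)
  then show ?thesis using assms
    by (simp del: tribV_back.simps add: tribV_back.simps(4) field_simps)
qed

lemma tribV_0: "tribV r s t 0 = 0"
  and tribV_1: "tribV r s t 1 = 1"
  and tribV_2: "tribV r s t 2 = r"
  by (simp_all add: tribV_def numeral_2_eq_2)

lemma tribV_minus_1: "t \<noteq> 0 \<Longrightarrow> tribV r s t (-1) = 0"
  using tribV_rec[of t r s "-1"] by (simp add: tribV_0 tribV_1 tribV_2)

lemma tribV_minus_2: "t \<noteq> 0 \<Longrightarrow> tribV r s t (-2) = 1 / t"
  using tribV_rec[of t r s "-2"] tribV_minus_1[of t r s]
  by (simp add: tribV_0 tribV_1 field_simps)

definition tribN :: "real \<Rightarrow> real \<Rightarrow> real \<Rightarrow> real \<Rightarrow> real \<Rightarrow> int \<Rightarrow> real" where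
  "tribN r s t a b n = t * tribV r s t (n - 1) * a * b
     + (tribV r s t (n + 1) - r * tribV r s t n) * b + tribV r s t n"

lemma tribN_rec:
  assumes "t \<noteq> 0"
  shows "tribN r s t a b (n + 3) =
    r * tribN r s t a b (n + 2) + s * tribN r s t a b (n + 1) + t * tribN r s t a b n"
proof -
  let ?V = "tribV r s t"
  have "?V (n + 2) = r * ?V (n + 1) + s * ?V n + t * ?V (n - 1)"
    using tribV_rec[OF assms, of r s "n - 1"] by (simp add: ac_simps)
  moreover have "?V (n + 4) = r * ?V (n + 3) + s * ?V (n + 2) + t * ?V (n + 1)"
    using tribV_rec[OF assms, of r s "n + 1"] by (simp add: add.assoc)
  ultimately show ?thesis
    unfolding tribN_def using tribV_rec[OF assms, of r s n]
    by (simp add: algebra_simps add.assoc)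
qed

lemma tribN_minus_1: "t \<noteq> 0 \<Longrightarrow> tribN r s t a b (-1) = a * b"
  by (simp add: tribN_def tribV_0 tribV_minus_1 tribV_minus_2)

lemma tribN_0: "t \<noteq> 0 \<Longrightarrow> tribN r s t a b 0 = b"
  by (simp add: tribN_def tribV_0 tribV_1 tribV_minus_1)

lemma tribN_1: "tribN r s t a b 1 = 1"
  by (simp add: tribN_def tribV_0 tribV_1 tribV_2)

lemma tribN_nonzero:
  assumes "(a, b) \<notin> forbidden_set r s t" and "n \<ge> 0"
  shows "tribN r s t a b n \<noteq> 0"
proof
  assume "tribN r s t a b n = 0"
  then have "(a, b) \<in> forbidden_set r s t"
    unfolding forbidden_set_def using \<open>n \<ge> 0\<close>
    by (auto intro!: bexI[of _ "n - 1"] simp: tribN_def add.commute)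
  with assms(1) show False by simp
qed

lemma ratio_solves_rational_recurrence:
  fixes N x :: "int \<Rightarrow> real" and \<alpha> \<beta> \<gamma> :: real
  assumes N_rec: "\<And>n. \<gamma> * N (n + 2) = \<beta> * N (n + 1) + \<alpha> * N n + N (n - 1)"
    and N_nonzero: "\<And>n. n \<ge> 0 \<Longrightarrow> N n \<noteq> 0"
    and "\<gamma> \<noteq> 0"
    and x_init: "x (-1) = N (-1) / N 0" "x 0 = N 0 / N 1"
    and x_rec: "\<And>n. n \<ge> 0 \<Longrightarrow> x (n + 1) = \<gamma> / (x n * (x (n - 1) + \<alpha>) + \<beta>)"
    and "n \<ge> 0"
  shows "x n = N n / N (n + 1)"
proof -
  have "x (int k - 1) = N (int k - 1) / N (int k) \<and> x (int k) = N (int k) / N (int k + 1)" for k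
  proof (induction k)
    case 0
    then show ?case using x_init by simp
  next
    case (Suc k)
    let ?n = "int k"
    have x_n: "x ?n = N ?n / N (?n + 1)" and x_pred: "x (?n - 1) = N (?n - 1) / N ?n"
      using Suc by auto
    have "N ?n \<noteq> 0" "N (?n + 1) \<noteq> 0" "N (?n + 2) \<noteq> 0"
      using N_nonzero by auto
    then have "x ?n * (x (?n - 1) + \<alpha>) + \<beta> = (N (?n - 1) + \<alpha> * N ?n + \<beta> * N (?n + 1)) / N (?n + 1)"
      unfolding x_n x_pred by (simp add: field_simps)
    also have "\<dots> = \<gamma> * N (?n + 2) / N (?n + 1)"
      using N_rec[of ?n] by (simp add: algebra_simps)
    finally have "x (?n + 1) = N (?n + 1) / N (?n + 2)"
      using x_rec[of ?n] \<open>N (?n + 1) \<noteq> 0\<close> \<open>N (?n + 2) \<noteq> 0\<close> \<open>\<gamma> \<noteq> 0\<close> by simp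
    then show ?case using x_n by (simp add: add.commute add.left_commute)
  qed
  moreover obtain k where "n = int k" using \<open>n \<ge> 0\<close> by (metis nonneg_eq_int)
  ultimately show ?thesis by simp
qed

theorem mainTheorem1:
  fixes \<alpha> \<beta> \<gamma> r s t :: real and x :: "int \<Rightarrow> real"
  assumes "\<alpha> \<ge> 0" and "\<beta> \<ge> 0" and "\<gamma> \<ge> 0" and "\<gamma> \<noteq> 0"
    and "r = \<beta> / \<gamma>" and "s = \<alpha> / \<gamma>" and "t = 1 / \<gamma>"
    and "x (-1) \<noteq> 0" and "x 0 \<noteq> 0"
    and "(x (-1), x 0) \<notin> forbidden_set r s t"
    and "\<And>n::int. n \<ge> 0 \<Longrightarrow> x (n + 1) = \<gamma> / (x n * (x (n - 1) + \<alpha>) + \<beta>)"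
  shows "\<forall>n::int. n \<ge> 0 \<longrightarrow> x n =
    (t * tribV r s t (n - 1) * x (-1) * x 0 + (tribV r s t (n + 1) - r * tribV r s t n) * x 0 + tribV r s t n)
    / (t * tribV r s t n * x (-1) * x 0 + (tribV r s t (n + 2) - r * tribV r s t (n + 1)) * x 0 + tribV r s t (n + 1))"
proof (intro allI impI)
  fix n :: int
  assume "n \<ge> 0"
  let ?N = "tribN r s t (x (-1)) (x 0)"
  have "t \<noteq> 0" using assms(4,7) by simp
  have coeffs: "\<gamma> * r = \<beta>" "\<gamma> * s = \<alpha>" "\<gamma> * t = 1"
    using assms(4-7) by simp_all
  have "\<gamma> * ?N (n + 2) = \<beta> * ?N (n + 1) + \<alpha> * ?N n + ?N (n - 1)" for n
    using arg_cong[OF tribN_rec[OF \<open>t \<noteq> 0\<close>, of r s "x (-1)" "x 0" "n - 1"], of "(*) \<gamma>"]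
    by (simp add: algebra_simps coeffs flip: mult.assoc)
  moreover have "x (-1) = ?N (-1) / ?N 0" "x 0 = ?N 0 / ?N 1"
    using assms(9) \<open>t \<noteq> 0\<close> by (simp_all add: tribN_minus_1 tribN_0 tribN_1)
  ultimately have "x n = ?N n / ?N (n + 1)"
    using ratio_solves_rational_recurrence[of \<gamma> ?N \<beta> \<alpha> x n] tribN_nonzero[OF assms(10)]
      assms(4,11) \<open>n \<ge> 0\<close> by blast
  then show "x n =
    (t * tribV r s t (n - 1) * x (-1) * x 0 + (tribV r s t (n + 1) - r * tribV r s t n) * x 0 + tribV r s t n)
    / (t * tribV r s t n * x (-1) * x 0 + (tribV r s t (n + 2) - r * tribV r s t (n + 1)) * x 0 + tribV r s t (n + 1))"
    by (simp add: tribN_def add.assoc)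
qed

end
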